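(* For every integer $\ell\ge1$, the Wu function $\varphi_{\ell,\ell}$ satisfies, for $0\le r\le2$, $$\varphi_{\ell,\ell}(r)=2^{\ell+1}\Gamma(\ell+1)\left[\frac{1^{(\ell)}}{(3/2)^{(\ell)}}-\frac r2\,{}_2F_1\!\left(-\ell,\tfrac12;\tfrac32;\tfrac{r^2}{4}\right)\right].$$
   Context: $f_\ell(r)=(1-r^2)_+^\ell$, $f_\ell*f_\ell(r)=\int_{\mathbb{R}}f_\ell(|y|)f_\ell(|r-y|)dy$ for $r\ge0$; $\mathscr{D}\varphi(r)=-\frac1r\varphi'(r)$; the Wu function is $\varphi_{\ell,k}(r)=\mathscr{D}^k(f_\ell*f_\ell)(r)$ ($k$-fold iterate). Pochhammer symbol: $a^{(0)}=1$, $a^{(n)}=a(a+1)\cdots(a+n-1)$. Hypergeometric function: ${}_2F_1(a,b;c;z)=\sum_{n\ge0}\frac{a^{(n)}b^{(n)}}{c^{(n)}}\frac{z^n}{n!}$. *)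

theory Defs
  imports "HOL-Analysis.Analysis"
begin

definition trunc_pow :: "nat \<Rightarrow> real \<Rightarrow> real" where
  "trunc_pow l r = (max 0 (1 - r\<^sup>2)) ^ l"

definition self_conv :: "nat \<Rightarrow> real \<Rightarrow> real" where
  "self_conv l r = integral UNIV (\<lambda>y. trunc_pow l \<bar>y\<bar> * trunc_pow l \<bar>r - y\<bar>)"

definition opD :: "(real \<Rightarrow> real) \<Rightarrow> real \<Rightarrow> real" where
  "opD \<phi> r = - (1 / r) * deriv \<phi> r"

text \<open>k-fold iterate applied to f_l * f_l (literal, meaningful for r > 0).\<close>
definition wu_raw :: "nat \<Rightarrow> nat \<Rightarrow> real \<Rightarrow> real" where
  "wu_raw l k = (opD ^^ k) (self_conv l)"

definition wu :: "nat \<Rightarrow> nat \<Rightarrow> real \<Rightarrow> real" where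
  "wu l k r = (if r = 0 then Lim (at_right 0) (wu_raw l k) else wu_raw l k r)"

definition hyp2F1 :: "real \<Rightarrow> real \<Rightarrow> real \<Rightarrow> real \<Rightarrow> real" where
  "hyp2F1 a b c z = (\<Sum>n. pochhammer a n * pochhammer b n / pochhammer c n * z ^ n / fact n)"

end

theory Submission
  imports Defs
begin

text \<open>
  Let psi_l be the right-hand side for r <= 2, continued by 0 beyond r = 2, and let
  A h (r) = int_r^3 u h(u) du, a right inverse of D on (0, 3). It suffices to show
  f_l * f_l = A^l psi_l on (0, 3), by induction on l; for l = 1 both sides are explicit
  polynomials. Differentiating under the integral sign and using y + (r - y) = r gives
  r phi'' - 4 (l+1) phi' = 4 (l+1)^2 r (f_l * f_l) for phi = f_(l+1) * f_(l+1). The recurrence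
  (2l+3) psi_(l+1) - r psi_(l+1)' = 4 (l+1)^2 psi_l and the commutation rule
  c A^(j+1) h + r^2 A^j h = A^(j+1) ((c - 2(j+1)) h - u h') show, with the induction hypothesis,
  that A^(l+1) psi_(l+1) satisfies the same equation. The difference W of the two sides
  solves r W'' = 4 (l+1) W' and vanishes on (2, 3), so W' / r^(4(l+1)) is constant, hence zero,
  and W = 0. Finally, the hypergeometric series terminates, and
  s 2F1(-l, 1/2; 3/2; s^2) = int_0^s (1 - t^2)^l dt.
\<close>

lemma has_real_derivative_glue:
  fixes f g :: "real \<Rightarrow> real"
  assumes f: "\<And>x. (f has_real_derivative f' x) (at x)"
    and g: "\<And>x. (g has_real_derivative g' x) (at x)"
    and "f c = g c" and "f' c = g' c"
  shows "((\<lambda>x. if x \<le> c then f x else g x) has_real_derivative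
    (if x \<le> c then f' x else g' x)) (at x)"
proof -
  have fd: "(f has_derivative (*) (f' y)) (at y within S)" for y S
    using has_field_derivative_at_within[OF f] by (simp add: has_field_derivative_def)
  have gd: "(g has_derivative (*) (g' y)) (at y within S)" for y S
    using has_field_derivative_at_within[OF g] by (simp add: has_field_derivative_def)
  have "((\<lambda>x. if x \<in> {..c} then f x else g x) has_derivative
      (if x \<in> {..c} then (*) (f' x) else (*) (g' x))) (at x within ({..c} \<union> {c<..}))"
    by (rule has_derivative_If_within_closures[where f'="\<lambda>x. (*) (f' x)"
          and g'="\<lambda>x. (*) (g' x)", OF fd gd]) (use assms in auto)
  moreover have "{..c} \<union> {c<..} = UNIV" by auto
  ultimately show ?thesis
    by (simp add: has_field_derivative_def if_distrib[of "(*)"])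
qed

lemma has_real_derivative_zero_constant_on_interval:
  fixes f :: "real \<Rightarrow> real"
  assumes "\<And>x. x \<in> {a<..<b} \<Longrightarrow> (f has_real_derivative 0) (at x)"
    and "x \<in> {a<..<b}" and "y \<in> {a<..<b}"
  shows "f x = f y"
proof -
  have "\<exists>c. \<forall>x\<in>{a<..<b}. f x = c"
    by (rule has_field_derivative_zero_constant)
       (auto intro!: has_field_derivative_at_within assms(1))
  then show ?thesis using assms(2,3) by auto
qed

lemma integral_eq_primitive_diff:
  fixes f f' :: "real \<Rightarrow> real"
  assumes "a \<le> b" and "\<And>x. (f has_real_derivative f' x) (at x)"
  shows "integral {a..b} f' = f b - f a"
proof -
  have "(f' has_integral (f b - f a)) {a..b}"
    by (rule fundamental_theorem_of_calculus[OF assms(1)])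
       (auto simp: has_real_derivative_iff_has_vector_derivative[symmetric]
             intro: has_field_derivative_at_within assms(2))
  then show ?thesis by (rule integral_unique)
qed

lemma integral_UNIV_eq_integral_support:
  fixes f :: "real \<Rightarrow> real"
  assumes "\<And>y. y \<notin> S \<Longrightarrow> f y = 0"
  shows "integral UNIV f = integral S f"
proof -
  have "f = (\<lambda>x. if x \<in> S then f x else 0)" using assms by auto
  then show ?thesis by (metis integral_restrict_UNIV)
qed

lemma ode_solution_vanishes:
  fixes W W' W'' :: "real \<Rightarrow> real" and n :: nat
  assumes "0 \<le> a" and "a < b"
    and W': "\<And>x. x \<in> {0<..<b} \<Longrightarrow> (W has_real_derivative W' x) (at x)"
    and W'': "\<And>x. x \<in> {0<..<b} \<Longrightarrow> (W' has_real_derivative W'' x) (at x)"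
    and ode: "\<And>x. x \<in> {0<..<b} \<Longrightarrow> x * W'' x = real n * W' x"
    and zero: "\<And>x. x \<in> {a<..<b} \<Longrightarrow> W x = 0"
    and r: "r \<in> {0<..<b}"
  shows "W r = 0"
proof -
  define c where "c = (a + b) / 2"
  have c: "c \<in> {a<..<b}" "c \<in> {0<..<b}"
    using assms(1,2) by (auto simp: c_def)
  have "(W has_real_derivative 0) (at c)"
    by (rule has_field_derivative_transform_within_open[where f="\<lambda>_. 0" and S="{a<..<b}"])
       (use zero c in auto)
  then have W'_c: "W' c = 0"
    using W'[OF c(2)] DERIV_unique by auto
  define V where "V x = W' x / x ^ n" for x
  have "(V has_real_derivative 0) (at x)" if x: "x \<in> {0<..<b}" for x
  proof -
    have "(V has_real_derivative
        (W'' x * x ^ n - W' x * (real n * x ^ (n - 1))) / (x ^ n * x ^ n)) (at x)"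
      unfolding V_def[abs_def] by (rule derivative_eq_intros W''[OF x] refl | use x in simp)+
    moreover have "x * (W'' x * x ^ n - W' x * (real n * x ^ (n - 1)))
        = x ^ n * (x * W'' x - real n * W' x)"
      by (cases n) (simp_all add: algebra_simps)
    ultimately show ?thesis using ode[OF x] x by simp
  qed
  then have "V x = V c" if "x \<in> {0<..<b}" for x
    by (rule has_real_derivative_zero_constant_on_interval[of 0 b]) (use that c in auto)
  then have "W' x = 0" if "x \<in> {0<..<b}" for x
    using that W'_c c by (fastforce simp: V_def)
  then have "W r = W c"
    using W' by (intro has_real_derivative_zero_constant_on_interval[of 0 b]) (use r c in auto)
  then show ?thesis using zero c by simp
qed

definition trunc_pow_deriv :: "nat \<Rightarrow> real \<Rightarrow> real" where
  "trunc_pow_deriv m z = - 2 * real m * z * trunc_pow (m - 1) z"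

lemma continuous_on_trunc_pow [continuous_intros]:
  "continuous_on S f \<Longrightarrow> continuous_on S (\<lambda>x. trunc_pow m (f x))"
  unfolding trunc_pow_def by (intro continuous_intros)

lemma continuous_on_trunc_pow_deriv [continuous_intros]: "continuous_on S (trunc_pow_deriv m)"
  unfolding trunc_pow_deriv_def[abs_def] by (intro continuous_intros)

lemma trunc_pow_outside: "m \<ge> 1 \<Longrightarrow> \<bar>z\<bar> \<ge> 1 \<Longrightarrow> trunc_pow m z = 0"
  using abs_square_less_1[of z] unfolding trunc_pow_def by (simp add: max_def)

lemma trunc_pow_deriv_outside: "m \<ge> 2 \<Longrightarrow> \<bar>z\<bar> \<ge> 1 \<Longrightarrow> trunc_pow_deriv m z = 0"
  unfolding trunc_pow_deriv_def using trunc_pow_outside[of "m - 1" z] by auto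

lemma trunc_pow_inside: "\<bar>z\<bar> \<le> 1 \<Longrightarrow> trunc_pow m z = (1 - z\<^sup>2) ^ m"
  unfolding trunc_pow_def by (simp add: abs_square_le_1)

lemma trunc_pow_Suc: "m \<ge> 1 \<Longrightarrow> trunc_pow (Suc m) z = (1 - z\<^sup>2) * trunc_pow m z"
  by (cases "\<bar>z\<bar> \<le> 1") (auto simp: trunc_pow_inside trunc_pow_outside)

lemma trunc_pow_abs: "trunc_pow m \<bar>z\<bar> = trunc_pow m z"
  unfolding trunc_pow_def by simp

lemma trunc_pow_has_derivative:
  assumes "m \<ge> 2"
  shows "(trunc_pow m has_real_derivative trunc_pow_deriv m z) (at z)"
proof -
  define p where "p u = (if u \<le> 0 then 0 else u ^ m)" for u :: real
  have p_deriv: "(p has_real_derivative (if u \<le> 0 then 0 else real m * u ^ (m - 1))) (at u)" for u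
    unfolding p_def[abs_def]
    by (rule has_real_derivative_glue) (use assms in \<open>auto intro!: derivative_eq_intros\<close>)
  have "trunc_pow m = (\<lambda>z. p (1 - z\<^sup>2))"
    using assms by (auto simp: trunc_pow_def p_def max_def)
  moreover have "((\<lambda>z. p (1 - z\<^sup>2)) has_real_derivative
      (if 1 - z\<^sup>2 \<le> 0 then 0 else real m * (1 - z\<^sup>2) ^ (m - 1)) * (- 2 * z)) (at z)"
    by (rule DERIV_chain2[OF p_deriv]) (auto intro!: derivative_eq_intros)
  moreover have "(if 1 - z\<^sup>2 \<le> 0 then 0 else real m * (1 - z\<^sup>2) ^ (m - 1)) * (- 2 * z)
      = trunc_pow_deriv m z"
    using assms by (auto simp: trunc_pow_deriv_def trunc_pow_def max_def)
  ultimately show ?thesis by simp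
qed

subsection \<open>Convolution of functions supported in [-1, 1]\<close>

definition conv :: "(real \<Rightarrow> real) \<Rightarrow> (real \<Rightarrow> real) \<Rightarrow> real \<Rightarrow> real" where
  "conv f g r = integral {-1..1} (\<lambda>y. f y * g (r - y))"

lemma conv_integrable:
  fixes f g :: "real \<Rightarrow> real"
  assumes "continuous_on UNIV f" and "continuous_on UNIV g"
  shows "(\<lambda>y. f y * g (r - y)) integrable_on {-1..1}"
  by (intro integrable_continuous_real continuous_intros continuous_on_subset[OF assms(1)]
        continuous_on_compose2[OF assms(2)]) auto

lemma conv_commute:
  fixes f g :: "real \<Rightarrow> real"
  assumes cf: "continuous_on UNIV f" and cg: "continuous_on UNIV g"
    and sf: "\<And>y. \<bar>y\<bar> \<ge> 1 \<Longrightarrow> f y = 0" and sg: "\<And>y. \<bar>y\<bar> \<ge> 1 \<Longrightarrow> g y = 0"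
  shows "conv f g r = conv g f r"
proof -
  have "((\<lambda>y. f y * g (r - y)) has_integral conv f g r) (cbox (-1) 1)"
    using integrable_integral[OF conv_integrable[OF cf cg]] by (simp add: conv_def)
  from has_integral_affinity[OF this, of "-1" r]
  have "((\<lambda>y. g y * f (r - y)) has_integral conv f g r) {r - 1..r + 1}"
    using image_affinity_atLeastAtMost[of "-1" r "-1" 1] by (simp add: mult.commute add.commute)
  then have "conv f g r = integral {r - 1..r + 1} (\<lambda>y. g y * f (r - y))"
    by (simp add: integral_unique)
  also have "\<dots> = integral UNIV (\<lambda>y. g y * f (r - y))"
    by (rule integral_UNIV_eq_integral_support[symmetric]) (use sf in auto)
  also have "\<dots> = conv g f r"
    unfolding conv_def by (rule integral_UNIV_eq_integral_support) (use sg in auto)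
  finally show ?thesis .
qed

lemma conv_has_derivative:
  fixes f g g' :: "real \<Rightarrow> real"
  assumes cf: "continuous_on UNIV f" and cg': "continuous_on UNIV g'"
    and dg: "\<And>z. (g has_real_derivative g' z) (at z)"
  shows "(conv f g has_real_derivative conv f g' r) (at r)"
proof -
  have cg: "continuous_on UNIV g"
    using dg by (meson DERIV_isCont continuous_at_imp_continuous_on)
  have "continuous_on UNIV (\<lambda>p::real\<times>real. f (snd p) * g' (fst p - snd p))"
    by (intro continuous_intros continuous_on_compose2[OF cf] continuous_on_compose2[OF cg']) auto
  then have "continuous_on (UNIV \<times> cbox (-1) 1) (\<lambda>(x, t). f t * g' (x - t))"
    by (rule continuous_on_subset[THEN continuous_on_eq]) (auto simp: split_beta)
  moreover have "((\<lambda>x. g (x - t)) has_real_derivative g' (x - t)) (at x)" for x t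
    using DERIV_chain2[OF dg DERIV_diff[OF DERIV_ident DERIV_const]] by simp
  ultimately have "((\<lambda>r. integral (cbox (-1) 1) (\<lambda>y. f y * g (r - y))) has_real_derivative
      integral (cbox (-1) 1) (\<lambda>y. f y * g' (r - y))) (at r within UNIV)"
    using conv_integrable[OF cf cg]
    by (intro leibniz_rule_field_derivative[where fx="\<lambda>r y. f y * g' (r - y)"])
       (auto intro!: derivative_eq_intros)
  then show ?thesis by (simp add: conv_def[abs_def])
qed

subsection \<open>The second-order equation satisfied by the self-convolution\<close>

lemma self_conv_eq_conv: "l \<ge> 1 \<Longrightarrow> self_conv l = conv (trunc_pow l) (trunc_pow l)"
  unfolding self_conv_def conv_def trunc_pow_abs
  by (intro ext integral_UNIV_eq_integral_support) (auto simp: trunc_pow_outside)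

lemma self_conv_vanishes:
  assumes "l \<ge> 1" and "r \<ge> 2"
  shows "self_conv l r = 0"
proof -
  have "(\<lambda>y. trunc_pow l \<bar>y\<bar> * trunc_pow l \<bar>r - y\<bar>) = (\<lambda>_. 0)"
  proof
    fix y
    show "trunc_pow l \<bar>y\<bar> * trunc_pow l \<bar>r - y\<bar> = 0"
      using assms by (cases "\<bar>y\<bar> \<ge> 1") (auto simp: trunc_pow_abs trunc_pow_outside)
  qed
  then show ?thesis unfolding self_conv_def by simp
qed

lemma self_conv_has_derivative:
  "l \<ge> 2 \<Longrightarrow> (self_conv l has_real_derivative conv (trunc_pow l) (trunc_pow_deriv l) r) (at r)"
  by (simp add: self_conv_eq_conv conv_has_derivative continuous_on_trunc_pow
      continuous_on_trunc_pow_deriv trunc_pow_has_derivative)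

lemma conv_trunc_pow_commute:
  "l \<ge> 2 \<Longrightarrow> conv (trunc_pow l) (trunc_pow_deriv l) = conv (trunc_pow_deriv l) (trunc_pow l)"
  by (intro ext conv_commute continuous_intros trunc_pow_outside trunc_pow_deriv_outside) auto

lemma conv_trunc_pow_has_derivative:
  "l \<ge> 2 \<Longrightarrow> (conv (trunc_pow l) (trunc_pow_deriv l) has_real_derivative
    conv (trunc_pow_deriv l) (trunc_pow_deriv l) r) (at r)"
  by (simp add: conv_trunc_pow_commute conv_has_derivative continuous_on_trunc_pow_deriv
      trunc_pow_has_derivative)

lemma self_conv_ode:
  assumes "l \<ge> 2"
  shows "r * conv (trunc_pow_deriv l) (trunc_pow_deriv l) r
      - 4 * real l * conv (trunc_pow l) (trunc_pow_deriv l) r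
    = 4 * (real l)\<^sup>2 * r * self_conv (l - 1) r"
proof -
  obtain m where l: "l = Suc m" and m: "m \<ge> 1" using assms by (cases l) auto
  let ?t = "trunc_pow l" and ?d = "trunc_pow_deriv l" and ?q = "trunc_pow m"
  have "((\<lambda>y. r * (?d y * ?d (r - y)) - 2 * real l * (?t y * ?d (r - y))
        - 2 * real l * (?d y * ?t (r - y)))
      has_integral r * conv ?d ?d r - 2 * real l * conv ?t ?d r - 2 * real l * conv ?d ?t r) {-1..1}"
    unfolding conv_def
    by (intro has_integral_diff has_integral_mult_right integrable_integral conv_integrable
        continuous_intros)
  moreover have "r * (?d y * ?d (r - y)) - 2 * real l * (?t y * ?d (r - y))
        - 2 * real l * (?d y * ?t (r - y))
      = 4 * (real l)\<^sup>2 * r * (?q y * ?q (r - y))" for y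
    unfolding trunc_pow_deriv_def l trunc_pow_Suc[OF m] by (simp add: algebra_simps power2_eq_square)
  ultimately have integral: "((\<lambda>y. 4 * (real l)\<^sup>2 * r * (?q y * ?q (r - y)))
      has_integral r * conv ?d ?d r - 4 * real l * conv ?t ?d r) {-1..1}"
    using conv_trunc_pow_commute[OF assms] by (simp add: mult.assoc)
  have "r * conv ?d ?d r - 4 * real l * conv ?t ?d r = 4 * (real l)\<^sup>2 * r * conv ?q ?q r"
    using integral_unique[OF integral] unfolding conv_def by simp
  then show ?thesis using self_conv_eq_conv[OF m] l by simp
qed

subsection \<open>A right inverse of the operator D\<close>

text \<open>
  Any upper limit beyond 2, the end of the support of the Wu functions, would do in place of 3:
  what matters is the interval (2, 3) on which all functions below vanish, which fixes the
  constants of integration.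
\<close>

definition admissible :: "(real \<Rightarrow> real) \<Rightarrow> bool" where
  "admissible h \<longleftrightarrow> continuous_on {0..3} h \<and> (\<forall>u\<in>{2..3}. h u = 0)"

definition antiD :: "(real \<Rightarrow> real) \<Rightarrow> real \<Rightarrow> real" where
  "antiD h r = integral {r..3} (\<lambda>u. u * h u)"

lemma antiD_has_derivative:
  assumes "admissible h" and "r \<in> {0<..<3}"
  shows "(antiD h has_real_derivative - (r * h r)) (at r)"
proof -
  have "continuous_on {0..3} (\<lambda>u. u * h u)"
    using assms(1) unfolding admissible_def by (intro continuous_intros) auto
  then have "(antiD h has_real_derivative - (r * h r)) (at r within {0..3})"
    unfolding antiD_def[abs_def] by (rule integral_has_real_derivative') (use assms in auto)
  moreover have "at r within {0..3} = at r"
    by (rule at_within_interior) (use assms in auto)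
  ultimately show ?thesis by simp
qed

lemma admissible_antiD:
  assumes "admissible h"
  shows "admissible (antiD h)"
proof -
  have "continuous_on {0..3} (\<lambda>u. u * h u)"
    using assms by (auto simp: admissible_def intro!: continuous_intros)
  then have "continuous_on {0..3} (antiD h)"
    unfolding antiD_def[abs_def] by (intro indefinite_integral_continuous_1' integrable_continuous_real)
  moreover have "antiD h r = 0" if "r \<in> {2..3}" for r
  proof -
    have "antiD h r = integral {r..3} (\<lambda>_. 0)"
      unfolding antiD_def using assms that by (intro integral_cong) (auto simp: admissible_def)
    then show ?thesis by simp
  qed
  ultimately show ?thesis by (simp add: admissible_def)
qed

lemma antiD_cong:
  assumes "\<And>u. u \<in> {0<..<3} \<Longrightarrow> f u = g u" and "r \<in> {0<..<3}"
  shows "antiD f r = antiD g r"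
  unfolding antiD_def by (rule integral_spike[where S="{3}"]) (use assms in auto)

lemma antiD_cmult: "antiD (\<lambda>u. c * f u) r = c * antiD f r"
  unfolding antiD_def by (simp flip: integral_mult_right add: algebra_simps)

lemma admissible_antiD_iter: "admissible h \<Longrightarrow> admissible ((antiD ^^ j) h)"
  by (induction j) (auto intro: admissible_antiD)

lemma antiD_iter_cong:
  assumes "\<And>u. u \<in> {0<..<3} \<Longrightarrow> f u = g u" and "r \<in> {0<..<3}"
  shows "(antiD ^^ j) f r = (antiD ^^ j) g r"
  using assms(2) by (induction j arbitrary: r) (auto intro: assms(1) antiD_cong)

lemma antiD_iter_cmult: "(antiD ^^ j) (\<lambda>u. c * f u) = (\<lambda>r. c * (antiD ^^ j) f r)"
  by (induction j) (simp_all add: antiD_cmult)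

lemma antiD_iter_has_derivative:
  "admissible h \<Longrightarrow> r \<in> {0<..<3} \<Longrightarrow>
    ((antiD ^^ Suc j) h has_real_derivative - (r * (antiD ^^ j) h r)) (at r)"
  using antiD_has_derivative[OF admissible_antiD_iter] by simp

lemma antiD_commute:
  assumes h: "admissible h" and h': "admissible h'"
    and deriv: "\<And>r. r \<in> {0<..<3} \<Longrightarrow> (h has_real_derivative h' r) (at r)"
    and r: "r \<in> {0<..<3}"
  shows "c * antiD h r + r\<^sup>2 * h r = antiD (\<lambda>u. (c - 2) * h u - u * h' u) r"
proof -
  define k where "k u = (c - 2) * h u - u * h' u" for u
  have k: "admissible k"
    using h h' unfolding admissible_def k_def by (auto intro!: continuous_intros)
  define L where "L r = c * antiD h r + r\<^sup>2 * h r - antiD k r" for r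
  have "(L has_real_derivative 0) (at x)" if x: "x \<in> {0<..<3}" for x
  proof -
    have "(L has_real_derivative
        c * (- (x * h x)) + (2 * x * h x + x\<^sup>2 * h' x) - (- (x * k x))) (at x)"
      unfolding L_def[abs_def]
      by (rule derivative_eq_intros antiD_has_derivative[OF h x] antiD_has_derivative[OF k x]
          deriv[OF x] | simp)+
    then show ?thesis by (simp add: k_def algebra_simps power2_eq_square)
  qed
  then have "L r = L (5/2)"
    by (rule has_real_derivative_zero_constant_on_interval) (use r in auto)
  also have "L (5/2) = 0"
    using admissible_antiD[OF h] admissible_antiD[OF k] h unfolding L_def admissible_def by auto
  finally show ?thesis unfolding L_def k_def by simp
qed

lemma antiD_iter_commute:
  assumes h: "admissible h" and h': "admissible h'"
    and deriv: "\<And>r. r \<in> {0<..<3} \<Longrightarrow> (h has_real_derivative h' r) (at r)"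
  shows "r \<in> {0<..<3} \<Longrightarrow> c * (antiD ^^ Suc j) h r + r\<^sup>2 * (antiD ^^ j) h r
    = (antiD ^^ Suc j) (\<lambda>u. (c - 2 * real (Suc j)) * h u - u * h' u) r"
proof (induction j arbitrary: c r)
  case 0
  then show ?case using antiD_commute[OF h h' deriv] by simp
next
  case (Suc j)
  let ?h = "(antiD ^^ Suc j) h"
  have "admissible (\<lambda>u. - (u * (antiD ^^ j) h u))"
    using admissible_antiD_iter[OF h, of j] unfolding admissible_def
    by (auto intro!: continuous_intros)
  then have "c * antiD ?h r + r\<^sup>2 * ?h r
      = antiD (\<lambda>u. (c - 2) * ?h u + u\<^sup>2 * (antiD ^^ j) h u) r"
    using antiD_commute[OF admissible_antiD_iter[OF h] _ antiD_iter_has_derivative[OF h] Suc.prems]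
    by (simp add: power2_eq_square mult.assoc)
  also have "\<dots> = antiD ((antiD ^^ Suc j) (\<lambda>u. (c - 2 - 2 * real (Suc j)) * h u - u * h' u)) r"
    by (rule antiD_cong[OF Suc.IH Suc.prems]) simp
  finally show ?case by (simp add: algebra_simps)
qed

subsection \<open>The closed form\<close>

text \<open>The primitive int_0^s (1 - t^2)^l dt, expanded binomially.\<close>

definition primitive_pow :: "nat \<Rightarrow> real \<Rightarrow> real" where
  "primitive_pow l s =
    (\<Sum>n\<le>l. (-1) ^ n * real (l choose n) * s ^ (2 * n + 1) / real (2 * n + 1))"

definition wu_closed :: "nat \<Rightarrow> real \<Rightarrow> real" where
  "wu_closed l r = 2 ^ (l + 1) * fact l * (primitive_pow l 1 - primitive_pow l (r / 2))"

definition wu_cutoff :: "nat \<Rightarrow> real \<Rightarrow> real" where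
  "wu_cutoff l r = (if r \<le> 2 then wu_closed l r else 0)"

lemma primitive_pow_has_derivative: "(primitive_pow l has_real_derivative (1 - s\<^sup>2) ^ l) (at s)"
proof -
  let ?term = "\<lambda>n. (-1) ^ n * real (l choose n) * (real (2 * n + 1) * s ^ (2 * n)) / real (2 * n + 1)"
  have "(primitive_pow l has_real_derivative (\<Sum>n\<le>l. ?term n)) (at s)"
    unfolding primitive_pow_def[abs_def]
    by (intro DERIV_sum DERIV_cdivide DERIV_cmult) (use DERIV_pow[of "2 * _ + 1" s] in simp)
  also have "(\<Sum>n\<le>l. ?term n) = (\<Sum>n\<le>l. real (l choose n) * (- s\<^sup>2) ^ n * 1 ^ (l - n))"
    by (intro sum.cong refl) (simp add: power_mult power_minus')
  also have "\<dots> = (1 - s\<^sup>2) ^ l"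
    using binomial_ring[of "- s\<^sup>2" 1 l] by simp
  finally show ?thesis .
qed

lemma primitive_pow_recurrence:
  assumes "l \<ge> 1"
  shows "real (2 * l + 1) * primitive_pow l s - s * (1 - s\<^sup>2) ^ l
    = 2 * real l * primitive_pow (l - 1) s"
proof -
  obtain m where l: "l = Suc m" using assms by (cases l) auto
  define L where "L s = real (2 * l + 1) * primitive_pow l s - s * (1 - s\<^sup>2) ^ l
    - 2 * real l * primitive_pow (l - 1) s" for s
  have "(L has_real_derivative 0) (at x)" for x
  proof -
    have "(L has_real_derivative real (2 * l + 1) * (1 - x\<^sup>2) ^ l
        - ((1 - x\<^sup>2) ^ l + x * (real l * (1 - x\<^sup>2) ^ (l - 1) * (- (2 * x))))
        - 2 * real l * (1 - x\<^sup>2) ^ (l - 1)) (at x)"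
      unfolding L_def[abs_def]
      by (rule derivative_eq_intros primitive_pow_has_derivative refl | simp)+
    then show ?thesis by (simp add: l algebra_simps power2_eq_square)
  qed
  then have "L s = L 0" by (intro DERIV_isconst_all allI)
  then show ?thesis by (simp add: L_def primitive_pow_def)
qed

lemma primitive_pow_1_eq_pochhammer: "primitive_pow l 1 = pochhammer 1 l / pochhammer (3/2) l"
proof -
  have "primitive_pow l 1 * pochhammer (3/2) l = pochhammer 1 l"
  proof (induction l)
    case 0
    then show ?case by (simp add: primitive_pow_def)
  next
    case (Suc m)
    have "primitive_pow (Suc m) 1 * pochhammer (3/2) (Suc m)
        = real (2 * Suc m + 1) * primitive_pow (Suc m) 1 / 2 * pochhammer (3/2) m"
      by (simp add: pochhammer_Suc algebra_simps)
    also have "\<dots> = real (Suc m) * (primitive_pow m 1 * pochhammer (3/2) m)"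
      using primitive_pow_recurrence[of "Suc m" 1] by simp
    also have "\<dots> = pochhammer 1 (Suc m)"
      by (simp add: Suc.IH pochhammer_Suc)
    finally show ?case .
  qed
  moreover have "pochhammer (3/2::real) l > 0" by (rule pochhammer_pos) simp
  ultimately show ?thesis by (simp add: eq_divide_eq)
qed

lemma primitive_pow_eq_hyp2F1: "s * hyp2F1 (- real l) (1/2) (3/2) (s\<^sup>2) = primitive_pow l s"
proof -
  have "hyp2F1 (- real l) (1/2) (3/2) (s\<^sup>2) = (\<Sum>n\<le>l.
      pochhammer (- real l) n * pochhammer (1/2) n / pochhammer (3/2) n * (s\<^sup>2) ^ n / fact n)"
    unfolding hyp2F1_def by (rule suminf_finite) (auto simp: pochhammer_of_nat_eq_0_iff not_le)
  also have "\<dots> = (\<Sum>n\<le>l. (-1) ^ n * real (l choose n) / real (2 * n + 1) * s ^ (2 * n))"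
  proof (rule sum.cong[OF refl])
    fix n
    assume "n \<in> {..l}"
    then have "pochhammer (- real l) n / fact n = (-1) ^ n * real (l choose n)"
      by (simp add: binomial_gbinomial gbinomial_pochhammer flip: power_mult_distrib)
    moreover have "pochhammer (1/2::real) n / pochhammer (3/2) n = 1 / real (2 * n + 1)"
    proof -
      have "pochhammer (1/2::real) n * (1/2 + real n) = 1/2 * pochhammer (3/2) n"
        using pochhammer_rec[of "1/2::real" n] by (simp add: pochhammer_Suc)
      moreover have "pochhammer (3/2::real) n > 0" by (rule pochhammer_pos) simp
      ultimately show ?thesis by (simp add: field_simps)
    qed
    moreover have "pochhammer (- real l) n * pochhammer (1/2) n / pochhammer (3/2) n * (s\<^sup>2) ^ n / fact n
        = pochhammer (- real l) n / fact n * (pochhammer (1/2) n / pochhammer (3/2) n) * (s\<^sup>2) ^ n"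
      by simp
    ultimately show "pochhammer (- real l) n * pochhammer (1/2) n / pochhammer (3/2) n * (s\<^sup>2) ^ n / fact n
        = (-1) ^ n * real (l choose n) / real (2 * n + 1) * s ^ (2 * n)"
      by (simp add: power_mult)
  qed
  finally show ?thesis
    by (simp add: primitive_pow_def sum_distrib_left field_simps)
qed

lemma wu_closed_has_derivative: "(wu_closed l has_real_derivative - (2 ^ l * fact l * (1 - r\<^sup>2 / 4) ^ l)) (at r)"
proof -
  have "(wu_closed l has_real_derivative 2 ^ (l + 1) * fact l * (- ((1 - (r / 2)\<^sup>2) ^ l * (1 / 2)))) (at r)"
    unfolding wu_closed_def[abs_def]
    by (rule derivative_eq_intros DERIV_chain2[OF primitive_pow_has_derivative] refl | simp)+
  then show ?thesis by (simp add: power_divide mult.assoc)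
qed

lemma wu_closed_2: "wu_closed l 2 = 0"
  by (simp add: wu_closed_def)

lemma wu_closed_recurrence:
  assumes "l \<ge> 1"
  shows "real (2 * l + 1) * wu_closed l r + r * (2 ^ l * fact l * (1 - r\<^sup>2 / 4) ^ l)
    = 4 * (real l)\<^sup>2 * wu_closed (l - 1) r"
proof -
  obtain m where l: "l = Suc m" using assms by (cases l) auto
  have "real (2 * l + 1) * wu_closed l r + r * (2 ^ l * fact l * (1 - r\<^sup>2 / 4) ^ l)
      = 2 ^ (l + 1) * fact l * (real (2 * l + 1) * primitive_pow l 1 - 1 * (1 - 1\<^sup>2) ^ l
          - (real (2 * l + 1) * primitive_pow l (r / 2) - (r / 2) * (1 - (r / 2)\<^sup>2) ^ l))"
    using assms by (simp add: wu_closed_def algebra_simps power_divide)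
  also have "\<dots> = 2 ^ (l + 1) * fact l * (2 * real l) * (primitive_pow (l - 1) 1 - primitive_pow (l - 1) (r / 2))"
    unfolding primitive_pow_recurrence[OF assms] by (simp add: algebra_simps)
  also have "\<dots> = 4 * (real l)\<^sup>2 * wu_closed (l - 1) r"
    by (simp add: wu_closed_def l algebra_simps power2_eq_square)
  finally show ?thesis .
qed

lemma admissible_wu_cutoff: "admissible (wu_cutoff l)"
proof -
  have "continuous_on {0..3} (\<lambda>r. if r \<le> 2 then wu_closed l r else 0)"
    by (rule continuous_on_cases_le)
       (auto intro: continuous_on_subset[OF DERIV_continuous_on[OF wu_closed_has_derivative]]
         simp: wu_closed_2)
  moreover have "wu_cutoff l u = 0" if "u \<in> {2..3}" for u
    using that wu_closed_2[of l] by (cases "u = 2") (auto simp: wu_cutoff_def)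
  ultimately show ?thesis by (simp add: admissible_def wu_cutoff_def[abs_def])
qed

lemma wu_cutoff_has_derivative:
  assumes "l \<ge> 1" and "r \<ge> 0"
  shows "(wu_cutoff l has_real_derivative - (2 ^ l * fact l * trunc_pow l (r / 2))) (at r)"
proof -
  have "(wu_cutoff l has_real_derivative (if r \<le> 2 then - (2 ^ l * fact l * (1 - r\<^sup>2 / 4) ^ l) else 0)) (at r)"
    unfolding wu_cutoff_def[abs_def]
    by (rule has_real_derivative_glue) (use assms wu_closed_has_derivative wu_closed_2 in auto)
  moreover have "(if r \<le> 2 then - (2 ^ l * fact l * (1 - r\<^sup>2 / 4) ^ l) else 0)
      = - (2 ^ l * fact l * trunc_pow l (r / 2))"
    using assms by (auto simp: trunc_pow_inside trunc_pow_outside power_divide)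
  ultimately show ?thesis by simp
qed

lemma wu_cutoff_recurrence:
  assumes "l \<ge> 1" and "r \<ge> 0"
  shows "real (2 * l + 1) * wu_cutoff l r + r * (2 ^ l * fact l * trunc_pow l (r / 2))
    = 4 * (real l)\<^sup>2 * wu_cutoff (l - 1) r"
  using wu_closed_recurrence[OF assms(1), of r] assms
  by (auto simp: wu_cutoff_def trunc_pow_inside trunc_pow_outside power_divide)

subsection \<open>Iterated D of the self-convolution\<close>

lemma antiD_iter_wu_cutoff_recurrence:
  assumes "l \<ge> 1" and r: "r \<in> {0<..<3}"
  shows "(4 * real l + 3) * (antiD ^^ l) (wu_cutoff (Suc l)) r
      + r\<^sup>2 * (antiD ^^ (l - 1)) (wu_cutoff (Suc l)) r
    = 4 * (real (Suc l))\<^sup>2 * (antiD ^^ l) (wu_cutoff l) r"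
proof -
  define h' where "h' u = - (2 ^ Suc l * fact (Suc l) * trunc_pow (Suc l) (u / 2))" for u
  have "admissible h'"
    unfolding admissible_def h'_def by (auto intro!: continuous_intros simp: trunc_pow_outside)
  moreover have "(wu_cutoff (Suc l) has_real_derivative h' x) (at x)" if "x \<in> {0<..<3}" for x
    unfolding h'_def using that by (intro wu_cutoff_has_derivative) auto
  ultimately have "(4 * real l + 3) * (antiD ^^ Suc (l - 1)) (wu_cutoff (Suc l)) r
      + r\<^sup>2 * (antiD ^^ (l - 1)) (wu_cutoff (Suc l)) r
    = (antiD ^^ Suc (l - 1)) (\<lambda>u. (4 * real l + 3 - 2 * real (Suc (l - 1))) * wu_cutoff (Suc l) u
      - u * h' u) r"
    using antiD_iter_commute[OF admissible_wu_cutoff] r by blast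
  also have "\<dots> = (antiD ^^ Suc (l - 1)) (\<lambda>u. 4 * (real (Suc l))\<^sup>2 * wu_cutoff l u) r"
  proof (rule antiD_iter_cong[OF _ r])
    fix u :: real
    assume "u \<in> {0<..<3}"
    then show "(4 * real l + 3 - 2 * real (Suc (l - 1))) * wu_cutoff (Suc l) u - u * h' u
        = 4 * (real (Suc l))\<^sup>2 * wu_cutoff l u"
      using wu_cutoff_recurrence[of "Suc l" u] assms(1) by (auto simp: h'_def algebra_simps)
  qed
  finally show ?thesis
    using assms(1) by (simp add: antiD_iter_cmult)
qed

lemma self_conv_1:
  assumes "0 \<le> r" and "r \<le> 2"
  shows "self_conv 1 r = 16/15 - 4 * r\<^sup>2 / 3 + 2 * r ^ 3 / 3 - r ^ 5 / 30"
proof -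
  let ?f = "\<lambda>y. trunc_pow 1 y * trunc_pow 1 (r - y)"
  have "self_conv 1 r = integral {-1..r - 1} ?f + integral {r - 1..1} ?f"
    unfolding self_conv_eq_conv[OF order.refl] conv_def
    using assms conv_integrable[OF continuous_on_trunc_pow continuous_on_trunc_pow, OF continuous_on_id' continuous_on_id']
    by (intro Henstock_Kurzweil_Integration.integral_combine[symmetric]) auto
  also have "integral {-1..r - 1} ?f = integral {-1..r - 1} (\<lambda>_. 0)"
    by (rule integral_cong) (auto simp: trunc_pow_outside)
  also have "integral {r - 1..1} ?f
      = integral {r - 1..1} (\<lambda>y. (1 - r\<^sup>2) + 2 * r * y - (2 - r\<^sup>2) * y\<^sup>2 - 2 * r * y ^ 3 + y ^ 4)"
    using assms
    by (intro integral_cong)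
       (auto simp: trunc_pow_inside algebra_simps power2_eq_square power3_eq_cube power4_eq_xxxx)
  also have "\<dots> = (\<lambda>y. (1 - r\<^sup>2) * y + r * y\<^sup>2 - (2 - r\<^sup>2) * y ^ 3 / 3 - r * y ^ 4 / 2 + y ^ 5 / 5) 1
      - (\<lambda>y. (1 - r\<^sup>2) * y + r * y\<^sup>2 - (2 - r\<^sup>2) * y ^ 3 / 3 - r * y ^ 4 / 2 + y ^ 5 / 5) (r - 1)"
    by (rule integral_eq_primitive_diff)
       (use assms in \<open>auto intro!: derivative_eq_intros
         simp: field_simps power2_eq_square power3_eq_cube power4_eq_xxxx\<close>)
  finally show ?thesis by (simp add: field_simps numeral_eq_Suc)
qed

lemma antiD_wu_cutoff_1:
  assumes "0 \<le> r" and "r \<le> 2"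
  shows "antiD (wu_cutoff 1) r = 16/15 - 4 * r\<^sup>2 / 3 + 2 * r ^ 3 / 3 - r ^ 5 / 30"
proof -
  let ?f = "\<lambda>u. u * wu_cutoff 1 u"
  have cont: "continuous_on {0..3} ?f"
    using admissible_wu_cutoff[of 1] by (auto simp: admissible_def intro!: continuous_intros)
  have "antiD (wu_cutoff 1) r = integral {r..2} ?f + integral {2..3} ?f"
    unfolding antiD_def
    by (intro Henstock_Kurzweil_Integration.integral_combine[symmetric]
        integrable_continuous_real[OF continuous_on_subset[OF cont]]) (use assms in auto)
  also have "integral {2..3} ?f = integral {2..3::real} (\<lambda>_. 0::real)"
    using admissible_wu_cutoff[of 1] by (intro integral_cong) (auto simp: admissible_def)
  also have "integral {r..2} ?f = integral {r..2} (\<lambda>u. 8/3 * u - 2 * u\<^sup>2 + u ^ 4 / 6)"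
    by (intro integral_cong)
       (simp add: wu_cutoff_def wu_closed_def primitive_pow_def algebra_simps power2_eq_square
         power3_eq_cube power4_eq_xxxx)
  also have "\<dots> = (\<lambda>u. 4 * u\<^sup>2 / 3 - 2 * u ^ 3 / 3 + u ^ 5 / 30) 2
      - (\<lambda>u. 4 * u\<^sup>2 / 3 - 2 * u ^ 3 / 3 + u ^ 5 / 30) r"
    by (rule integral_eq_primitive_diff)
       (use assms in \<open>auto intro!: derivative_eq_intros
         simp: field_simps power2_eq_square power3_eq_cube power4_eq_xxxx\<close>)
  finally show ?thesis by simp
qed

lemma self_conv_1_eq_antiD:
  assumes "r \<in> {0<..<3}"
  shows "self_conv 1 r = antiD (wu_cutoff 1) r"
proof (cases "r \<le> 2")
  case True
  then show ?thesis using assms self_conv_1[of r] antiD_wu_cutoff_1[of r] by simp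
next
  case False
  then show ?thesis
    using assms self_conv_vanishes[of 1 r] admissible_antiD[OF admissible_wu_cutoff[of 1]]
    by (auto simp: admissible_def)
qed

lemma self_conv_eq_antiD_iter_Suc:
  assumes "l \<ge> 1"
    and IH: "\<And>x. x \<in> {0<..<3} \<Longrightarrow> self_conv l x = (antiD ^^ l) (wu_cutoff l) x"
    and r: "r \<in> {0<..<3}"
  shows "self_conv (Suc l) r = (antiD ^^ Suc l) (wu_cutoff (Suc l)) r"
proof -
  let ?L = "Suc l" and ?t = "trunc_pow (Suc l)" and ?d = "trunc_pow_deriv (Suc l)"
  define H where "H = (antiD ^^ ?L) (wu_cutoff ?L)"
  define K where "K = (antiD ^^ l) (wu_cutoff ?L)"
  define K' where "K' = (antiD ^^ (l - 1)) (wu_cutoff ?L)"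
  have L2: "?L \<ge> 2" using assms(1) by simp
  have H: "(H has_real_derivative - (x * K x)) (at x)" if "x \<in> {0<..<3}" for x
    unfolding H_def K_def by (rule antiD_iter_has_derivative[OF admissible_wu_cutoff that])
  have K: "(K has_real_derivative - (x * K' x)) (at x)" if "x \<in> {0<..<3}" for x
    using antiD_iter_has_derivative[OF admissible_wu_cutoff that, of "l - 1"] assms(1)
    by (simp add: K_def K'_def)
  define W where "W x = self_conv ?L x - H x" for x
  define W' where "W' x = conv ?t ?d x + x * K x" for x
  define W'' where "W'' x = conv ?d ?d x + (K x - x * (x * K' x))" for x
  have "W r = 0"
  proof (rule ode_solution_vanishes[where W=W and W'=W' and W''=W'' and n="4 * ?L" and a=2])
    fix x :: real
    assume x: "x \<in> {0<..<3}"
    show "(W has_real_derivative W' x) (at x)"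
      using DERIV_diff[OF self_conv_has_derivative[OF L2] H[OF x]]
      by (simp add: W_def[abs_def] W'_def)
    show "(W' has_real_derivative W'' x) (at x)"
      unfolding W'_def[abs_def] W''_def
      by (rule derivative_eq_intros conv_trunc_pow_has_derivative[OF L2] K[OF x] refl | simp)+
    have rec: "(4 * real l + 3) * K x + x\<^sup>2 * K' x = 4 * (real ?L)\<^sup>2 * self_conv l x"
      using antiD_iter_wu_cutoff_recurrence[OF assms(1) x] unfolding K_def K'_def IH[OF x] .
    have "x * W'' x - real (4 * ?L) * W' x
        = (x * conv ?d ?d x - 4 * real ?L * conv ?t ?d x)
          - x * ((4 * real l + 3) * K x + x\<^sup>2 * K' x)"
      unfolding W'_def W''_def by (simp add: algebra_simps power2_eq_square)
    also have "\<dots> = 0"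
      using self_conv_ode[OF L2, of x] rec by simp
    finally show "x * W'' x = real (4 * ?L) * W' x" by simp
  next
    fix x :: real
    assume "x \<in> {2<..<3}"
    then show "W x = 0"
      using self_conv_vanishes[of ?L x] admissible_antiD_iter[OF admissible_wu_cutoff, of ?L ?L]
      by (auto simp: W_def H_def admissible_def)
  qed (use r in auto)
  then show ?thesis by (simp add: W_def H_def)
qed

lemma self_conv_eq_antiD_iter:
  "l \<ge> 1 \<Longrightarrow> r \<in> {0<..<3} \<Longrightarrow> self_conv l r = (antiD ^^ l) (wu_cutoff l) r"
proof (induction l arbitrary: r rule: nat_induct_at_least)
  case base
  then show ?case using self_conv_1_eq_antiD by simp
next
  case (Suc l)
  then show ?case using self_conv_eq_antiD_iter_Suc by blast
qed

lemma opD_eq_on_interval: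
  assumes "admissible h" and "\<And>x. x \<in> {0<..<3} \<Longrightarrow> f x = antiD h x" and r: "r \<in> {0<..<3}"
  shows "opD f r = h r"
proof -
  have "(f has_real_derivative - (r * h r)) (at r)"
    by (rule has_field_derivative_transform_within_open[OF antiD_has_derivative[OF assms(1) r],
          where S="{0<..<3}"]) (use assms in auto)
  then show ?thesis
    using r by (simp add: opD_def DERIV_imp_deriv)
qed

lemma opD_iter_self_conv:
  assumes "l \<ge> 1" and "k \<le> l" and "r \<in> {0<..<3}"
  shows "(opD ^^ k) (self_conv l) r = (antiD ^^ (l - k)) (wu_cutoff l) r"
  using assms(2,3)
proof (induction k arbitrary: r)
  case 0
  then show ?case using self_conv_eq_antiD_iter[OF assms(1)] by simp
next
  case (Suc k)
  have "l - k = Suc (l - Suc k)"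
    using Suc.prems by simp
  then have "(antiD ^^ (l - k)) (wu_cutoff l) = antiD ((antiD ^^ (l - Suc k)) (wu_cutoff l))"
    by simp
  then show ?case
    using Suc by (auto intro!: opD_eq_on_interval admissible_antiD_iter admissible_wu_cutoff)
qed

lemma wu_diag_eq_wu_closed:
  assumes "l \<ge> 1" and "0 \<le> r" and "r \<le> 2"
  shows "wu l l r = wu_closed l r"
proof -
  have wu_raw: "wu_raw l l x = wu_closed l x" if "0 < x" and "x \<le> 2" for x
    using opD_iter_self_conv[OF assms(1) order.refl, of x] that
    by (simp add: wu_raw_def wu_cutoff_def)
  show ?thesis
  proof (cases "r = 0")
    case True
    have "(wu_closed l \<longlongrightarrow> wu_closed l 0) (at_right 0)"
      using DERIV_isCont[OF wu_closed_has_derivative] by (simp add: isCont_def filterlim_at_split)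
    moreover have "eventually (\<lambda>x. wu_closed l x = wu_raw l l x) (at_right 0)"
      by (rule eventually_mono[OF eventually_at_right_real[of 0 2]]) (auto simp: wu_raw)
    ultimately have "(wu_raw l l \<longlongrightarrow> wu_closed l 0) (at_right 0)"
      by (rule Lim_transform_eventually)
    then show ?thesis using True by (simp add: wu_def tendsto_Lim)
  next
    case False
    then show ?thesis using assms wu_raw by (simp add: wu_def)
  qed
qed

theorem theorem4p3:
  fixes l :: nat and r :: real
  assumes "l \<ge> 1" and "0 \<le> r" and "r \<le> 2"
  shows "wu l l r = 2 ^ (l + 1) * Gamma (real l + 1) *
           (pochhammer 1 l / pochhammer (3/2) l
            - r / 2 * hyp2F1 (- real l) (1/2) (3/2) (r\<^sup>2 / 4))"
proof -
  have "Gamma (real l + 1) = fact l"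
    using Gamma_fact[of l] by (simp add: add.commute)
  moreover have "r / 2 * hyp2F1 (- real l) (1/2) (3/2) (r\<^sup>2 / 4) = primitive_pow l (r / 2)"
    using primitive_pow_eq_hyp2F1[of "r / 2" l] by (simp add: power_divide)
  ultimately show ?thesis
    using wu_diag_eq_wu_closed[OF assms] by (simp add: wu_closed_def primitive_pow_1_eq_pochhammer)
qed

end
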